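(* For every $i\in\{1,\dots,k\}$ and every $\gamma>0$: (a) if $c_i(0)=0$ and $p_i>(1-\varepsilon)+\delta$, then $c_i(\gamma)=0$; (b) if $c_i(0)=1$ and $p_i<(1-\varepsilon)-\delta$, then $c_i(\gamma)=1$.
   Context: Let $k\ge1$, $\varepsilon\in(0,1)$, $\delta\ge0$, examples $\mathbf{z}_1,\dots,\mathbf{z}_k$ with base conformity values $A(\mathbf{z}_i)\in\mathbb{R}$, and numbers $p_i\in[0,1]$ (estimated probabilities of correctness from the base predictor). The update function is $U^*(\mathbf{z}_i;A,\delta)=+1$ if $p_i<(1-\varepsilon)-\delta$, $-1$ if $p_i>(1-\varepsilon)+\delta$, and $0$ otherwise; for $\gamma\ge0$, $A^*_\gamma(\mathbf{z}_i)=A(\mathbf{z}_i)+\gamma U^*(\mathbf{z}_i;A,\delta)$. Define $q(\gamma)$: among indices $i\in\{1,\dots,k\}$ with $\sum_{j=1}^k\mathbb{I}[A^*_\gamma(\mathbf{z}_i)\ge A^*_\gamma(\mathbf{z}_j)]+1\ge\varepsilon(k+1)$, take those minimizing $A^*_\gamma(\mathbf{z}_i)$, and let $q(\gamma)$ be the smallest such index; $t(\gamma)=A^*_\gamma(\mathbf{z}_{q(\gamma)})$. Finally $c_i(\gamma)=\mathbb{I}[A^*_\gamma(\mathbf{z}_i)\ge t(\gamma)]$ indicates whether the prediction for example $i$ is correct. *)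

theory Defs
  imports Complex_Main
begin

text \<open>Examples are indexed by 1..k; A i is the base conformity value A(z_i),
  p i the estimated probability of correctness.\<close>

definition Ustar :: "real \<Rightarrow> real \<Rightarrow> (nat \<Rightarrow> real) \<Rightarrow> nat \<Rightarrow> real" where
  "Ustar eps \<delta> p i =
     (if p i < (1 - eps) - \<delta> then 1
      else if p i > (1 - eps) + \<delta> then -1 else 0)"

definition Astar :: "real \<Rightarrow> real \<Rightarrow> (nat \<Rightarrow> real) \<Rightarrow> (nat \<Rightarrow> real) \<Rightarrow> real \<Rightarrow> nat \<Rightarrow> real" where
  "Astar eps \<delta> A p \<gamma> i = A i + \<gamma> * Ustar eps \<delta> p i"

definition eligible :: "nat \<Rightarrow> real \<Rightarrow> real \<Rightarrow> (nat \<Rightarrow> real) \<Rightarrow> (nat \<Rightarrow> real) \<Rightarrow> real \<Rightarrow> nat set" where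
  "eligible k eps \<delta> A p \<gamma> =
     {i \<in> {1..k}. real (card {j \<in> {1..k}. Astar eps \<delta> A p \<gamma> i \<ge> Astar eps \<delta> A p \<gamma> j}) + 1
                   \<ge> eps * (real k + 1)}"

definition qidx :: "nat \<Rightarrow> real \<Rightarrow> real \<Rightarrow> (nat \<Rightarrow> real) \<Rightarrow> (nat \<Rightarrow> real) \<Rightarrow> real \<Rightarrow> nat" where
  "qidx k eps \<delta> A p \<gamma> =
     (LEAST i. i \<in> eligible k eps \<delta> A p \<gamma> \<and>
        (\<forall>j \<in> eligible k eps \<delta> A p \<gamma>. Astar eps \<delta> A p \<gamma> i \<le> Astar eps \<delta> A p \<gamma> j))"

definition thr :: "nat \<Rightarrow> real \<Rightarrow> real \<Rightarrow> (nat \<Rightarrow> real) \<Rightarrow> (nat \<Rightarrow> real) \<Rightarrow> real \<Rightarrow> real" where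
  "thr k eps \<delta> A p \<gamma> = Astar eps \<delta> A p \<gamma> (qidx k eps \<delta> A p \<gamma>)"

definition correct :: "nat \<Rightarrow> real \<Rightarrow> real \<Rightarrow> (nat \<Rightarrow> real) \<Rightarrow> (nat \<Rightarrow> real) \<Rightarrow> real \<Rightarrow> nat \<Rightarrow> nat" where
  "correct k eps \<delta> A p \<gamma> i =
     (if Astar eps \<delta> A p \<gamma> i \<ge> thr k eps \<delta> A p \<gamma> then 1 else 0)"

end

theory Submission
  imports Defs
begin

text \<open>The eligible set is upward closed in the conformity order and contains a maximiser,
  so the threshold is its least element: an example is judged correct exactly when its own
  rank passes the cut \<open>eps (k + 1)\<close>. Under the update, an example with \<open>U\<^sup>* = -1\<close> drops by
  \<open>\<gamma>\<close> while every other example drops by at most \<open>\<gamma>\<close>, so its rank cannot grow; symmetrically,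
  with \<open>U\<^sup>* = 1\<close> its rank cannot shrink.\<close>

abbreviation rank :: "(nat \<Rightarrow> 'b::linorder) \<Rightarrow> nat set \<Rightarrow> 'b \<Rightarrow> nat" where
  "rank f S x \<equiv> card {j \<in> S. f j \<le> x}"

lemma rank_mono:
  assumes "finite S" and "x \<le> y"
  shows "rank f S x \<le> rank f S y"
  using assms by (intro card_mono) auto

lemma Least_argmin:
  fixes f :: "nat \<Rightarrow> 'b::linorder"
  assumes "finite E" and "E \<noteq> {}"
  defines "q \<equiv> LEAST i. i \<in> E \<and> (\<forall>j\<in>E. f i \<le> f j)"
  shows "q \<in> E \<and> (\<forall>j\<in>E. f q \<le> f j)"
proof -
  have "Min (f ` E) \<in> f ` E"
    using assms(1,2) by simp
  then obtain m where "m \<in> E" "f m = Min (f ` E)"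
    by auto
  then have "m \<in> E \<and> (\<forall>j\<in>E. f m \<le> f j)"
    using assms(1) by auto
  then show ?thesis
    unfolding q_def by (rule LeastI)
qed

lemma le_Least_argmin_iff:
  fixes f :: "nat \<Rightarrow> 'b::linorder"
  assumes "finite E" and "E \<noteq> {}" and "E \<subseteq> S"
    and upward: "\<And>i i'. i \<in> E \<Longrightarrow> i' \<in> S \<Longrightarrow> f i \<le> f i' \<Longrightarrow> i' \<in> E"
    and "i \<in> S"
  shows "f (LEAST i. i \<in> E \<and> (\<forall>j\<in>E. f i \<le> f j)) \<le> f i \<longleftrightarrow> i \<in> E"
  using Least_argmin[OF assms(1,2), of f] upward[OF _ \<open>i \<in> S\<close>] by blast

lemma correct_iff_rank:
  assumes "k \<ge> 1" and "eps < 1" and "i \<in> {1..k}"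
  shows "correct k eps \<delta> A p \<gamma> i =
    (if eps * (real k + 1) \<le> real (rank (Astar eps \<delta> A p \<gamma>) {1..k} (Astar eps \<delta> A p \<gamma> i)) + 1
     then 1 else 0)"
proof -
  define f where "f = Astar eps \<delta> A p \<gamma>"
  define E where "E = eligible k eps \<delta> A p \<gamma>"
  have E_eq: "E = {i \<in> {1..k}. eps * (real k + 1) \<le> real (rank f {1..k} (f i)) + 1}"
    unfolding E_def f_def eligible_def by simp
  have "Max (f ` {1..k}) \<in> f ` {1..k}"
    using assms(1) by simp
  then obtain m where m: "m \<in> {1..k}" "f m = Max (f ` {1..k})"
    by auto
  have "{j \<in> {1..k}. f j \<le> f m} = {1..k}"
    using m by auto
  moreover have "eps * (real k + 1) \<le> real k + 1"
    using assms(2) by (simp add: mult_le_cancel_right1)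
  ultimately have "m \<in> E"
    using m(1) by (simp add: E_eq)
  have upward: "i' \<in> E" if "i \<in> E" "i' \<in> {1..k}" "f i \<le> f i'" for i i'
    using that rank_mono[of "{1..k}" "f i" "f i'" f] by (auto simp: E_eq)
  have "E \<subseteq> {1..k}" "finite E"
    by (auto simp: E_eq)
  have "f (LEAST i. i \<in> E \<and> (\<forall>j\<in>E. f i \<le> f j)) \<le> f i \<longleftrightarrow> i \<in> E"
    by (rule le_Least_argmin_iff[OF \<open>finite E\<close> _ \<open>E \<subseteq> {1..k}\<close> upward assms(3)])
      (use \<open>m \<in> E\<close> in auto)
  then have "thr k eps \<delta> A p \<gamma> \<le> f i \<longleftrightarrow> i \<in> E"
    by (simp only: thr_def qidx_def E_def f_def)
  then show ?thesis
    using assms(3) by (simp add: correct_def f_def E_eq)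
qed

lemma rank_Astar_le_rank_base:
  assumes "Ustar eps \<delta> p i = -1" and "\<gamma> \<ge> 0"
  shows "rank (Astar eps \<delta> A p \<gamma>) {1..k} (Astar eps \<delta> A p \<gamma> i) \<le> rank A {1..k} (A i)"
proof (intro card_mono subsetI)
  fix j assume "j \<in> {j \<in> {1..k}. Astar eps \<delta> A p \<gamma> j \<le> Astar eps \<delta> A p \<gamma> i}"
  moreover have "A j - \<gamma> \<le> Astar eps \<delta> A p \<gamma> j"
    using assms(2) by (auto simp: Astar_def Ustar_def)
  ultimately show "j \<in> {j \<in> {1..k}. A j \<le> A i}"
    using assms(1) by (auto simp: Astar_def)
qed simp

lemma rank_base_le_rank_Astar:
  assumes "Ustar eps \<delta> p i = 1" and "\<gamma> \<ge> 0"
  shows "rank A {1..k} (A i) \<le> rank (Astar eps \<delta> A p \<gamma>) {1..k} (Astar eps \<delta> A p \<gamma> i)"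
proof (intro card_mono subsetI)
  fix j assume "j \<in> {j \<in> {1..k}. A j \<le> A i}"
  moreover have "Astar eps \<delta> A p \<gamma> j \<le> A j + \<gamma>"
    using assms(2) by (auto simp: Astar_def Ustar_def)
  ultimately show "j \<in> {j \<in> {1..k}. Astar eps \<delta> A p \<gamma> j \<le> Astar eps \<delta> A p \<gamma> i}"
    using assms(1) by (auto simp: Astar_def)
qed simp

theorem theorem1:
  fixes k :: nat and eps \<delta> \<gamma> :: real and A p :: "nat \<Rightarrow> real" and i :: nat
  assumes "k \<ge> 1" and "0 < eps" and "eps < 1" and "\<delta> \<ge> 0"
    and "\<forall>j \<in> {1..k}. 0 \<le> p j \<and> p j \<le> 1"
    and "i \<in> {1..k}" and "\<gamma> > 0"
  shows "(correct k eps \<delta> A p 0 i = 0 \<and> p i > (1 - eps) + \<delta> \<longrightarrow> correct k eps \<delta> A p \<gamma> i = 0)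
       \<and> (correct k eps \<delta> A p 0 i = 1 \<and> p i < (1 - eps) - \<delta> \<longrightarrow> correct k eps \<delta> A p \<gamma> i = 1)"
proof -
  let ?cut = "eps * (real k + 1)"
  let ?rank0 = "rank A {1..k} (A i)"
  let ?rank\<gamma> = "rank (Astar eps \<delta> A p \<gamma>) {1..k} (Astar eps \<delta> A p \<gamma> i)"
  have A0: "Astar eps \<delta> A p 0 = A"
    by (simp add: Astar_def fun_eq_iff)
  note correct0 = correct_iff_rank[OF assms(1,3,6), of \<delta> A p 0, unfolded A0]
  note correct\<gamma> = correct_iff_rank[OF assms(1,3,6), of \<delta> A p \<gamma>]
  have "correct k eps \<delta> A p \<gamma> i = 0" if "correct k eps \<delta> A p 0 i = 0" "p i > (1 - eps) + \<delta>"
  proof -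
    have "Ustar eps \<delta> p i = -1"
      using that(2) assms(4) by (simp add: Ustar_def)
    then have "real ?rank\<gamma> \<le> real ?rank0"
      using assms(7) by (intro of_nat_mono rank_Astar_le_rank_base) simp_all
    moreover have "\<not> ?cut \<le> real ?rank0 + 1"
      using that(1) correct0 by (metis zero_neq_one)
    ultimately show ?thesis
      unfolding correct\<gamma> by simp
  qed
  moreover have "correct k eps \<delta> A p \<gamma> i = 1" if "correct k eps \<delta> A p 0 i = 1" "p i < (1 - eps) - \<delta>"
  proof -
    have "Ustar eps \<delta> p i = 1"
      using that(2) by (simp add: Ustar_def)
    then have "real ?rank0 \<le> real ?rank\<gamma>"
      using assms(7) by (intro of_nat_mono rank_base_le_rank_Astar) simp_all
    moreover have "?cut \<le> real ?rank0 + 1"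
      using that(1) correct0 by (metis zero_neq_one)
    ultimately show ?thesis
      unfolding correct\<gamma> by simp
  qed
  ultimately show ?thesis
    by blast
qed

end
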